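(* Let $S$ be an abundant semigroup with an adequate transversal $S^0$. Then for all $x\in S^0$, $a\in\Lambda$ and $b\in I$: $a\,\mathcal{R}\,x^\ast$ if and only if $\overline{a}=x^\ast$, and $b\,\mathcal{L}\,x^+$ if and only if $\overline{b}=x^+$.
   Context: For a semigroup $S$, $S^1$ is $S$ with an identity adjoined, $\mathcal{L},\mathcal{R}$ Green's relations of $S$. $\mathcal{R}^\ast=\{(a,b):\forall x,y\in S^1,\ xa=ya\iff xb=yb\}$, $\mathcal{L}^\ast=\{(a,b):\forall x,y\in S^1,\ ax=ay\iff bx=by\}$. $S$ is abundant if each $\mathcal{R}^\ast$- and $\mathcal{L}^\ast$-class contains an idempotent; adequate if also idempotents commute (then $a^+$, $a^\ast$ are the unique idempotents $\mathcal{R}^\ast$-, resp. $\mathcal{L}^\ast$-related to $a$). An abundant subsemigroup $U$ of abundant $S$ is a $\ast$-subsemigroup if $\mathcal{L}^\ast(U)=\mathcal{L}^\ast(S)\cap(U\times U)$, $\mathcal{R}^\ast(U)=\mathcal{R}^\ast(S)\cap(U\times U)$. An adequate $\ast$-subsemigroup $S^0$ of abundant $S$ is an adequate transversal if each $x\in S$ has a unique $\overline{x}\in S^0$ and idempotents $e,f$ of $S$ (then unique, written $e_x,f_x$) with $x=e\overline{x}f$, $e\,\mathcal{L}\,\overline{x}^+$, $f\,\mathcal{R}\,\overline{x}^\ast$. $I=\{e_x:x\in S\}$, $\Lambda=\{f_x:x\in S\}$. *)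

theory Defs
  imports Main
begin

text \<open>The semigroup S is the whole type 'a (class semigroup_mult). Elements of S^1
  are modelled as 'a option, None being the adjoined identity. Relations that
  depend on a subsemigroup U are relativised to a carrier set U.\<close>

fun lmult1 :: "'a option \<Rightarrow> 'a \<Rightarrow> 'a::semigroup_mult" where
  "lmult1 None a = a"
| "lmult1 (Some x) a = x * a"

fun rmult1 :: "'a::semigroup_mult \<Rightarrow> 'a option \<Rightarrow> 'a" where
  "rmult1 a None = a"
| "rmult1 a (Some x) = a * x"

definition one_ext :: "'a set \<Rightarrow> 'a option set" where
  "one_ext U = insert None (Some ` U)"

definition idem :: "'a::semigroup_mult \<Rightarrow> bool" where
  "idem e \<longleftrightarrow> e * e = e"

text \<open>Green's relations of S (S = UNIV): a S^1 = b S^1, resp. S^1 a = S^1 b.\<close>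
definition greenR :: "'a::semigroup_mult \<Rightarrow> 'a \<Rightarrow> bool" where
  "greenR a b \<longleftrightarrow> range (rmult1 a) = range (rmult1 b)"

definition greenL :: "'a::semigroup_mult \<Rightarrow> 'a \<Rightarrow> bool" where
  "greenL a b \<longleftrightarrow> range (\<lambda>x. lmult1 x a) = range (\<lambda>x. lmult1 x b)"

definition Rstar :: "'a set \<Rightarrow> 'a::semigroup_mult \<Rightarrow> 'a \<Rightarrow> bool" where
  "Rstar U a b \<longleftrightarrow> a \<in> U \<and> b \<in> U \<and>
     (\<forall>x\<in>one_ext U. \<forall>y\<in>one_ext U. lmult1 x a = lmult1 y a \<longleftrightarrow> lmult1 x b = lmult1 y b)"

definition Lstar :: "'a set \<Rightarrow> 'a::semigroup_mult \<Rightarrow> 'a \<Rightarrow> bool" where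
  "Lstar U a b \<longleftrightarrow> a \<in> U \<and> b \<in> U \<and>
     (\<forall>x\<in>one_ext U. \<forall>y\<in>one_ext U. rmult1 a x = rmult1 a y \<longleftrightarrow> rmult1 b x = rmult1 b y)"

definition subsemigroup :: "'a::semigroup_mult set \<Rightarrow> bool" where
  "subsemigroup U \<longleftrightarrow> (\<forall>a\<in>U. \<forall>b\<in>U. a * b \<in> U)"

definition abundant :: "'a::semigroup_mult set \<Rightarrow> bool" where
  "abundant U \<longleftrightarrow> subsemigroup U \<and>
     (\<forall>a\<in>U. (\<exists>e\<in>U. idem e \<and> Rstar U a e) \<and> (\<exists>f\<in>U. idem f \<and> Lstar U a f))"

definition adequate :: "'a::semigroup_mult set \<Rightarrow> bool" where
  "adequate U \<longleftrightarrow> abundant U \<and>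
     (\<forall>e\<in>U. \<forall>f\<in>U. idem e \<longrightarrow> idem f \<longrightarrow> e * f = f * e)"

definition plus :: "'a set \<Rightarrow> 'a::semigroup_mult \<Rightarrow> 'a" where
  "plus U a = (THE e. e \<in> U \<and> idem e \<and> Rstar U a e)"

definition star :: "'a set \<Rightarrow> 'a::semigroup_mult \<Rightarrow> 'a" where
  "star U a = (THE f. f \<in> U \<and> idem f \<and> Lstar U a f)"

definition star_subsemigroup :: "'a::semigroup_mult set \<Rightarrow> bool" where
  "star_subsemigroup U \<longleftrightarrow> abundant U \<and>
     (\<forall>a\<in>U. \<forall>b\<in>U. (Lstar U a b \<longleftrightarrow> Lstar UNIV a b) \<and> (Rstar U a b \<longleftrightarrow> Rstar UNIV a b))"

definition decomp :: "'a::semigroup_mult set \<Rightarrow> 'a \<Rightarrow> 'a \<times> 'a \<times> 'a \<Rightarrow> bool" where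
  "decomp S0 x t \<longleftrightarrow> (case t of (xb, e, f) \<Rightarrow>
     xb \<in> S0 \<and> idem e \<and> idem f \<and> x = e * xb * f \<and>
     greenL e (plus S0 xb) \<and> greenR f (star S0 xb))"

definition adequate_transversal :: "'a::semigroup_mult set \<Rightarrow> bool" where
  "adequate_transversal S0 \<longleftrightarrow> adequate S0 \<and> star_subsemigroup S0 \<and>
     (\<forall>x. \<exists>!t. decomp S0 x t)"

definition bar :: "'a::semigroup_mult set \<Rightarrow> 'a \<Rightarrow> 'a" where
  "bar S0 x = fst (THE t. decomp S0 x t)"

definition e_of :: "'a::semigroup_mult set \<Rightarrow> 'a \<Rightarrow> 'a" where
  "e_of S0 x = fst (snd (THE t. decomp S0 x t))"

definition f_of :: "'a::semigroup_mult set \<Rightarrow> 'a \<Rightarrow> 'a" where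
  "f_of S0 x = snd (snd (THE t. decomp S0 x t))"

definition Iset :: "'a::semigroup_mult set \<Rightarrow> 'a set" where
  "Iset S0 = range (e_of S0)"

definition Lambda :: "'a::semigroup_mult set \<Rightarrow> 'a set" where
  "Lambda S0 = range (f_of S0)"

end

theory Submission
  imports Defs
begin

text \<open>An element a of \<Lambda> is f_y for some y, so it is an idempotent R-related to
  g = (bar y)*, and a = g \<cdot> g \<cdot> a is itself a decomposition of a with transversal part g;
  by uniqueness bar a = g. Hence a R x* iff g R x*, and two commuting R-related
  idempotents coincide. The statement for I is the left-right dual.\<close>

lemma adequate_idem_commute:
  "adequate S0 \<Longrightarrow> e \<in> S0 \<Longrightarrow> f \<in> S0 \<Longrightarrow> idem e \<Longrightarrow> idem f \<Longrightarrow> e * f = f * e"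
  unfolding adequate_def by blast

lemma greenR_idem_absorb: "greenR e g \<Longrightarrow> idem e \<Longrightarrow> e * g = g"
proof -
  assume R: "greenR e g" and e: "idem e"
  have "g \<in> range (rmult1 e)" using R unfolding greenR_def by (metis rangeI rmult1.simps(1))
  then obtain u where "g = rmult1 e u" by blast
  with e show ?thesis unfolding idem_def by (cases u) (auto simp: mult.assoc[symmetric])
qed

lemma greenL_idem_absorb: "greenL e g \<Longrightarrow> idem e \<Longrightarrow> g * e = g"
proof -
  assume L: "greenL e g" and e: "idem e"
  have "g \<in> range (\<lambda>u. lmult1 u e)" using L unfolding greenL_def by (metis rangeI lmult1.simps(1))
  then obtain u where "g = lmult1 u e" by blast
  with e show ?thesis unfolding idem_def by (cases u) (auto simp: mult.assoc)
qed

lemma greenR_commuting_idems_eq: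
  assumes "greenR e f" "idem e" "idem f" "e * f = f * e"
  shows "e = f"
proof -
  have "greenR f e" using assms(1) unfolding greenR_def by simp
  then show ?thesis using assms greenR_idem_absorb by metis
qed

lemma greenL_commuting_idems_eq:
  assumes "greenL e f" "idem e" "idem f" "e * f = f * e"
  shows "e = f"
proof -
  have "greenL f e" using assms(1) unfolding greenL_def by simp
  then show ?thesis using assms greenL_idem_absorb by metis
qed

lemma Lstar_idem_unique:
  assumes "adequate S0" "f \<in> S0" "f' \<in> S0" "idem f" "idem f'" "Lstar S0 x f" "Lstar S0 x f'"
  shows "f = f'"
proof -
  have L: "\<And>u v. u \<in> one_ext S0 \<Longrightarrow> v \<in> one_ext S0 \<Longrightarrow>
      rmult1 f u = rmult1 f v \<longleftrightarrow> rmult1 f' u = rmult1 f' v"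
    using assms(6,7) unfolding Lstar_def by blast
  have S1: "Some f' \<in> one_ext S0" "Some f \<in> one_ext S0" "None \<in> one_ext S0"
    using assms(2,3) unfolding one_ext_def by auto
  have "f * f' = f" using L[OF S1(1) S1(3)] assms(5) unfolding idem_def by simp
  moreover have "f' * f = f'" using L[OF S1(2) S1(3)] assms(4) unfolding idem_def by simp
  ultimately show ?thesis using adequate_idem_commute[OF assms(1-5)] by simp
qed

lemma Rstar_idem_unique:
  assumes "adequate S0" "e \<in> S0" "e' \<in> S0" "idem e" "idem e'" "Rstar S0 x e" "Rstar S0 x e'"
  shows "e = e'"
proof -
  have R: "\<And>u v. u \<in> one_ext S0 \<Longrightarrow> v \<in> one_ext S0 \<Longrightarrow>
      lmult1 u e = lmult1 v e \<longleftrightarrow> lmult1 u e' = lmult1 v e'"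
    using assms(6,7) unfolding Rstar_def by blast
  have S1: "Some e' \<in> one_ext S0" "Some e \<in> one_ext S0" "None \<in> one_ext S0"
    using assms(2,3) unfolding one_ext_def by auto
  have "e' * e = e" using R[OF S1(1) S1(3)] assms(5) unfolding idem_def by simp
  moreover have "e * e' = e'" using R[OF S1(2) S1(3)] assms(4) unfolding idem_def by simp
  ultimately show ?thesis using adequate_idem_commute[OF assms(1-5)] by simp
qed

lemma star_in_idem_Lstar:
  assumes "adequate S0" "x \<in> S0"
  shows "star S0 x \<in> S0 \<and> idem (star S0 x) \<and> Lstar S0 x (star S0 x)"
proof -
  have "\<exists>f\<in>S0. idem f \<and> Lstar S0 x f" using assms unfolding adequate_def abundant_def by blast
  then have "\<exists>!f. f \<in> S0 \<and> idem f \<and> Lstar S0 x f" using Lstar_idem_unique[OF assms(1)] by blast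
  from theI'[OF this] show ?thesis unfolding star_def by blast
qed

lemma plus_in_idem_Rstar:
  assumes "adequate S0" "x \<in> S0"
  shows "plus S0 x \<in> S0 \<and> idem (plus S0 x) \<and> Rstar S0 x (plus S0 x)"
proof -
  have "\<exists>e\<in>S0. idem e \<and> Rstar S0 x e" using assms unfolding adequate_def abundant_def by blast
  then have "\<exists>!e. e \<in> S0 \<and> idem e \<and> Rstar S0 x e" using Rstar_idem_unique[OF assms(1)] by blast
  from theI'[OF this] show ?thesis unfolding plus_def by blast
qed

lemma star_idem:
  assumes "adequate S0" "g \<in> S0" "idem g"
  shows "star S0 g = g"
proof -
  have "Lstar S0 g g" using assms(2) unfolding Lstar_def by blast
  then show ?thesis using star_in_idem_Lstar[OF assms(1,2)] Lstar_idem_unique[OF assms(1)] assms by blast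
qed

lemma plus_idem:
  assumes "adequate S0" "g \<in> S0" "idem g"
  shows "plus S0 g = g"
proof -
  have "Rstar S0 g g" using assms(2) unfolding Rstar_def by blast
  then show ?thesis using plus_in_idem_Rstar[OF assms(1,2)] Rstar_idem_unique[OF assms(1)] assms by blast
qed

lemma decomp_bar:
  assumes "adequate_transversal S0"
  shows "decomp S0 y (bar S0 y, e_of S0 y, f_of S0 y)"
proof -
  have "\<exists>!t. decomp S0 y t" using assms unfolding adequate_transversal_def by blast
  from theI'[OF this] show ?thesis unfolding bar_def e_of_def f_of_def by simp
qed

lemma bar_eq_if_decomp:
  assumes "adequate_transversal S0" "decomp S0 y (yb, e, f)"
  shows "bar S0 y = yb"
proof -
  have "\<exists>!t. decomp S0 y t" using assms(1) unfolding adequate_transversal_def by blast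
  then have "(THE t. decomp S0 y t) = (yb, e, f)" using assms(2) by (rule the1_equality)
  then show ?thesis unfolding bar_def by simp
qed

lemma Lambda_bar:
  assumes T: "adequate_transversal S0" and a: "a \<in> Lambda S0"
  shows "bar S0 a \<in> S0 \<and> idem (bar S0 a) \<and> greenR a (bar S0 a)"
proof -
  have ad: "adequate S0" using T unfolding adequate_transversal_def by blast
  obtain y where a_def: "a = f_of S0 y" using a unfolding Lambda_def by blast
  define g where "g = star S0 (bar S0 y)"
  have yb: "bar S0 y \<in> S0" and a_idem: "idem a" and aR: "greenR a g"
    using decomp_bar[OF T, of y] unfolding decomp_def g_def a_def by auto
  have g: "g \<in> S0" "idem g" using star_in_idem_Lstar[OF ad yb] unfolding g_def by auto
  have "greenR g a" using aR unfolding greenR_def by simp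
  then have "g * a = a" using greenR_idem_absorb g(2) by blast
  then have "decomp S0 a (g, g, a)"
    unfolding decomp_def using g a_idem aR star_idem[OF ad g] plus_idem[OF ad g]
    by (auto simp: greenL_def idem_def mult.assoc)
  then have "bar S0 a = g" by (rule bar_eq_if_decomp[OF T])
  then show ?thesis using g aR by simp
qed

lemma Iset_bar:
  assumes T: "adequate_transversal S0" and b: "b \<in> Iset S0"
  shows "bar S0 b \<in> S0 \<and> idem (bar S0 b) \<and> greenL b (bar S0 b)"
proof -
  have ad: "adequate S0" using T unfolding adequate_transversal_def by blast
  obtain y where b_def: "b = e_of S0 y" using b unfolding Iset_def by blast
  define g where "g = plus S0 (bar S0 y)"
  have yb: "bar S0 y \<in> S0" and b_idem: "idem b" and bL: "greenL b g"
    using decomp_bar[OF T, of y] unfolding decomp_def g_def b_def by auto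
  have g: "g \<in> S0" "idem g" using plus_in_idem_Rstar[OF ad yb] unfolding g_def by auto
  have "greenL g b" using bL unfolding greenL_def by simp
  then have "b * g = b" using greenL_idem_absorb g(2) by blast
  then have "decomp S0 b (g, b, g)"
    unfolding decomp_def using g b_idem bL star_idem[OF ad g] plus_idem[OF ad g]
    by (auto simp: greenR_def idem_def mult.assoc)
  then have "bar S0 b = g" by (rule bar_eq_if_decomp[OF T])
  then show ?thesis using g bL by simp
qed

lemma greenR_idem_iff_eq:
  assumes "adequate S0" "g \<in> S0" "h \<in> S0" "idem g" "idem h" "greenR a g"
  shows "greenR a h \<longleftrightarrow> g = h"
proof
  assume "greenR a h"
  then have "greenR g h" using assms(6) unfolding greenR_def by simp
  then show "g = h" using greenR_commuting_idems_eq adequate_idem_commute assms(1-5) by metis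
qed (use assms(6) in simp)

lemma greenL_idem_iff_eq:
  assumes "adequate S0" "g \<in> S0" "h \<in> S0" "idem g" "idem h" "greenL b g"
  shows "greenL b h \<longleftrightarrow> g = h"
proof
  assume "greenL b h"
  then have "greenL g h" using assms(6) unfolding greenL_def by simp
  then show "g = h" using greenL_commuting_idems_eq adequate_idem_commute assms(1-5) by metis
qed (use assms(6) in simp)

theorem lemma2p15:
  fixes S0 :: "'a::semigroup_mult set"
  assumes "abundant (UNIV :: 'a set)"
    and "adequate_transversal S0"
    and "x \<in> S0" and "a \<in> Lambda S0" and "b \<in> Iset S0"
  shows "(greenR a (star S0 x) \<longleftrightarrow> bar S0 a = star S0 x)
       \<and> (greenL b (plus S0 x) \<longleftrightarrow> bar S0 b = plus S0 x)"
proof -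
  have ad: "adequate S0" using assms(2) unfolding adequate_transversal_def by blast
  have "greenR a (star S0 x) \<longleftrightarrow> bar S0 a = star S0 x"
    using greenR_idem_iff_eq[OF ad] Lambda_bar[OF assms(2,4)] star_in_idem_Lstar[OF ad assms(3)]
    by blast
  moreover have "greenL b (plus S0 x) \<longleftrightarrow> bar S0 b = plus S0 x"
    using greenL_idem_iff_eq[OF ad] Iset_bar[OF assms(2,5)] plus_in_idem_Rstar[OF ad assms(3)]
    by blast
  ultimately show ?thesis ..
qed

end
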